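(* Let $M$ be a countable transitive $\aleph_0$-categorical structure with no algebraicity admitting weak elimination of imaginaries, $G=\operatorname{Aut}(M)$, and let $\mu$ be a $G$-invariant, ergodic Borel probability measure on $\mathrm{LO}(M)$ which respects every $2$-type. Then $\mu$ is a Dirac measure.
   Context: $\mathrm{LO}(M)$ is the compact space of linear orders on $M$ with $a<_{g\cdot x}b\iff g^{-1}a<_xg^{-1}b$. A $2$-type is a $G$-orbit on $M^2$, $\mathrm{tp}(ab)$ the orbit of $(a,b)$. A measure $\mu$ on $\mathrm{LO}(M)$ respects a $2$-type $\tau$ if for all $a,b,c\in M$ with $\mathrm{tp}(ac)=\mathrm{tp}(bc)=\tau$, for $\mu$-a.e. $x$, $c$ is not strictly between $a$ and $b$ in $<_x$. No algebraicity: for finite $A\subseteq M$, all orbits of the pointwise stabilizer $G_A$ on $M\setminus A$ are infinite. Weak elimination of imaginaries: every proper open subgroup $V<G$ contains some $G_{\bar a}$ ($\bar a$ finite tuple) with finite index. *)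

theory Defs
  imports "HOL-Probability.Probability"
begin

section \<open>Permutation groups on a countable set M (= UNIV :: 'a set)\<close>

definition perm_group :: "('a \<Rightarrow> 'a) set \<Rightarrow> bool" where
  "perm_group G \<longleftrightarrow> (\<forall>g\<in>G. bij g) \<and> id \<in> G \<and>
     (\<forall>g\<in>G. \<forall>h\<in>G. g \<circ> h \<in> G) \<and> (\<forall>g\<in>G. inv g \<in> G)"

text \<open>Closed in Sym(M) for the pointwise convergence topology; these are exactly
  the automorphism groups of structures with universe M.\<close>
definition closed_perm_group :: "('a \<Rightarrow> 'a) set \<Rightarrow> bool" where
  "closed_perm_group G \<longleftrightarrow> perm_group G \<and>
     (\<forall>f. bij f \<longrightarrow> (\<forall>A. finite A \<longrightarrow> (\<exists>g\<in>G. \<forall>a\<in>A. g a = f a)) \<longrightarrow> f \<in> G)"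

definition pstab :: "('a \<Rightarrow> 'a) set \<Rightarrow> 'a set \<Rightarrow> ('a \<Rightarrow> 'a) set" where
  "pstab G A = {g\<in>G. \<forall>a\<in>A. g a = a}"

definition tuple_orbit :: "('a \<Rightarrow> 'a) set \<Rightarrow> 'a list \<Rightarrow> 'a list set" where
  "tuple_orbit G xs = {map g xs | g. g \<in> G}"

text \<open>Oligomorphic: finitely many orbits on n-tuples for every n
  (by Ryll-Nardzewski, equivalent to aleph_0-categoricity of the structure).\<close>
definition oligomorphic :: "('a \<Rightarrow> 'a) set \<Rightarrow> bool" where
  "oligomorphic G \<longleftrightarrow> (\<forall>n. finite {tuple_orbit G xs | xs. length xs = n})"

definition transitive_group :: "('a \<Rightarrow> 'a) set \<Rightarrow> bool" where
  "transitive_group G \<longleftrightarrow> (\<forall>a b. \<exists>g\<in>G. g a = b)"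

definition no_algebraicity :: "('a \<Rightarrow> 'a) set \<Rightarrow> bool" where
  "no_algebraicity G \<longleftrightarrow>
     (\<forall>A a. finite A \<longrightarrow> a \<notin> A \<longrightarrow> infinite {g a | g. g \<in> pstab G A})"

definition subgroup_of :: "('a \<Rightarrow> 'a) set \<Rightarrow> ('a \<Rightarrow> 'a) set \<Rightarrow> bool" where
  "subgroup_of V G \<longleftrightarrow> V \<subseteq> G \<and> id \<in> V \<and>
     (\<forall>g\<in>V. \<forall>h\<in>V. g \<circ> h \<in> V) \<and> (\<forall>g\<in>V. inv g \<in> V)"

text \<open>A subgroup is open in the pointwise convergence topology iff it contains
  some pointwise stabilizer of a finite set.\<close>
definition open_subgroup :: "('a \<Rightarrow> 'a) set \<Rightarrow> ('a \<Rightarrow> 'a) set \<Rightarrow> bool" where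
  "open_subgroup V G \<longleftrightarrow> subgroup_of V G \<and> (\<exists>A. finite A \<and> pstab G A \<subseteq> V)"

definition left_cosets :: "('a \<Rightarrow> 'a) set \<Rightarrow> ('a \<Rightarrow> 'a) set \<Rightarrow> ('a \<Rightarrow> 'a) set set" where
  "left_cosets V H = {(\<lambda>h. g \<circ> h) ` H | g. g \<in> V}"

text \<open>Weak elimination of imaginaries: every proper open subgroup V contains
  G_{a} (a a finite tuple, i.e. G_A for the finite set A of its entries)
  as a subgroup of finite index.\<close>
definition weak_elim_imag :: "('a \<Rightarrow> 'a) set \<Rightarrow> bool" where
  "weak_elim_imag G \<longleftrightarrow>
     (\<forall>V. open_subgroup V G \<longrightarrow> V \<noteq> G \<longrightarrow>
        (\<exists>A. finite A \<and> pstab G A \<subseteq> V \<and> finite (left_cosets V (pstab G A))))"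

definition is_LO :: "('a \<times> 'a) set \<Rightarrow> bool" where
  "is_LO x \<longleftrightarrow> irrefl x \<and> trans x \<and> (\<forall>a b. a \<noteq> b \<longrightarrow> (a, b) \<in> x \<or> (b, a) \<in> x)"

definition LO :: "('a \<times> 'a) set set" where
  "LO = {x. is_LO x}"

text \<open>Borel sigma-algebra of the compact space LO(M) (subspace of 2^(M x M));
  for countable M it is generated by the clopen sets {x. a <_x b}.\<close>
definition LO_space :: "('a \<times> 'a) set measure" where
  "LO_space = sigma LO {{x\<in>LO. (a, b) \<in> x} | a b. True}"

definition act :: "('a \<Rightarrow> 'a) \<Rightarrow> ('a \<times> 'a) set \<Rightarrow> ('a \<times> 'a) set" where
  "act g x = {(a, b). (inv g a, inv g b) \<in> x}"

definition invariant_measure :: "('a \<Rightarrow> 'a) set \<Rightarrow> ('a \<times> 'a) set measure \<Rightarrow> bool" where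
  "invariant_measure G \<mu> \<longleftrightarrow>
     (\<forall>g\<in>G. \<forall>B\<in>sets \<mu>. act g ` B \<in> sets \<mu> \<and> emeasure \<mu> (act g ` B) = emeasure \<mu> B)"

definition ergodic_measure :: "('a \<Rightarrow> 'a) set \<Rightarrow> ('a \<times> 'a) set measure \<Rightarrow> bool" where
  "ergodic_measure G \<mu> \<longleftrightarrow>
     (\<forall>B\<in>sets \<mu>. (\<forall>g\<in>G. act g ` B = B) \<longrightarrow> emeasure \<mu> B = 0 \<or> emeasure \<mu> B = 1)"

definition same_2type :: "('a \<Rightarrow> 'a) set \<Rightarrow> 'a \<times> 'a \<Rightarrow> 'a \<times> 'a \<Rightarrow> bool" where
  "same_2type G p q \<longleftrightarrow> (\<exists>g\<in>G. g (fst p) = fst q \<and> g (snd p) = snd q)"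

definition strictly_between :: "('a \<times> 'a) set \<Rightarrow> 'a \<Rightarrow> 'a \<Rightarrow> 'a \<Rightarrow> bool" where
  "strictly_between x a c b \<longleftrightarrow> ((a, c) \<in> x \<and> (c, b) \<in> x) \<or> ((b, c) \<in> x \<and> (c, a) \<in> x)"

definition respects_2type ::
  "('a \<Rightarrow> 'a) set \<Rightarrow> ('a \<times> 'a) set measure \<Rightarrow> ('a \<times> 'a) set \<Rightarrow> bool" where
  "respects_2type G \<mu> \<tau> \<longleftrightarrow>
     (\<forall>a b c. (a, c) \<in> \<tau> \<longrightarrow> (b, c) \<in> \<tau> \<longrightarrow> (AE x in \<mu>. \<not> strictly_between x a c b))"

definition two_types :: "('a \<Rightarrow> 'a) set \<Rightarrow> ('a \<times> 'a) set set" where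
  "two_types G = {{q. same_2type G p q} | p. True}"

end

theory Submission
  imports Defs
begin

text \<open>Fix a 2-type \<tau> of distinct elements. In an order respecting \<tau> and its converse, all
  \<tau>-predecessors of a point lie on the same side of it, and so do all \<tau>-successors; hence the
  side on which the pairs of \<tau> fall propagates along the relation ``having a common
  \<tau>-predecessor''. The equivalence generated by this relation is G-invariant with a class of
  size at least two, so it is universal: the setwise stabiliser of a proper class would be a
  proper open subgroup containing a point stabiliser G_b, and weak elimination of imaginaries
  gives it a finite orbit, whereas no algebraicity makes the relevant G_b-orbits infinite.
  Thus a.e. order contains all of \<tau> or none of it, and the set of orders containing \<tau> is
  invariant, so by ergodicity every pair is almost surely ordered in one fixed way. As M\<times>M is
  countable, the measure is concentrated on a single order.\<close>

definition two_type :: "('a \<Rightarrow> 'a) set \<Rightarrow> 'a \<times> 'a \<Rightarrow> ('a \<times> 'a) set" where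
  "two_type G p = {q. same_2type G p q}"

lemma two_type_in_two_types: "two_type G p \<in> two_types G"
  unfolding two_type_def two_types_def by blast

lemma two_type_refl: "perm_group G \<Longrightarrow> p \<in> two_type G p"
  unfolding two_type_def same_2type_def perm_group_def by (auto intro!: bexI[of _ id])

lemma two_type_converse: "two_type G (b, a) = (two_type G (a, b))\<inverse>"
  by (auto simp: two_type_def same_2type_def)

lemma two_type_closed:
  assumes "perm_group G" "g \<in> G" "(c, d) \<in> two_type G p"
  shows "(g c, g d) \<in> two_type G p"
proof -
  obtain h where "h \<in> G" "h (fst p) = c" "h (snd p) = d"
    using assms(3) by (auto simp: two_type_def same_2type_def)
  moreover have "g \<circ> h \<in> G" using assms(1,2) \<open>h \<in> G\<close> by (auto simp: perm_group_def)
  ultimately show ?thesis unfolding two_type_def same_2type_def by (auto intro!: bexI[of _ "g \<circ> h"])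
qed

lemma two_type_off_diagonal:
  assumes "perm_group G" "fst p \<noteq> snd p" "(c, d) \<in> two_type G p"
  shows "c \<noteq> d"
proof -
  obtain h where "h \<in> G" "h (fst p) = c" "h (snd p) = d"
    using assms(3) by (auto simp: two_type_def same_2type_def)
  moreover have "bij h" using assms(1) \<open>h \<in> G\<close> by (auto simp: perm_group_def)
  ultimately show ?thesis using assms(2) by (metis bij_pointE)
qed

lemma two_type_successors_infinite:
  assumes "perm_group G" "no_algebraicity G" "fst p \<noteq> snd p" "(c, d) \<in> two_type G p"
  shows "infinite {d. (c, d) \<in> two_type G p}"
proof -
  have "infinite {g d | g. g \<in> pstab G {c}}"
    using assms(2) two_type_off_diagonal[OF assms(1,3,4)] unfolding no_algebraicity_def by auto
  moreover have "{g d | g. g \<in> pstab G {c}} \<subseteq> {d. (c, d) \<in> two_type G p}"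
    using two_type_closed[OF assms(1) _ assms(4)] by (force simp: pstab_def)
  ultimately show ?thesis using finite_subset by blast
qed

definition invariant_rel :: "('a \<Rightarrow> 'a) set \<Rightarrow> ('a \<times> 'a) set \<Rightarrow> bool" where
  "invariant_rel G E \<longleftrightarrow> (\<forall>g\<in>G. \<forall>u v. (u, v) \<in> E \<longrightarrow> (g u, g v) \<in> E)"

lemma invariant_rel_converse: "invariant_rel G E \<Longrightarrow> invariant_rel G (E\<inverse>)"
  unfolding invariant_rel_def by simp

lemma invariant_rel_relcomp:
  assumes "invariant_rel G E" "invariant_rel G F" shows "invariant_rel G (E O F)"
  unfolding invariant_rel_def
proof (intro ballI allI impI)
  fix g u w assume "g \<in> G" "(u, w) \<in> E O F"
  then obtain v where "(u, v) \<in> E" "(v, w) \<in> F" by blast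
  then show "(g u, g w) \<in> E O F" using assms \<open>g \<in> G\<close> unfolding invariant_rel_def by blast
qed

lemma invariant_rel_rtrancl:
  assumes "invariant_rel G E" shows "invariant_rel G (E\<^sup>*)"
  unfolding invariant_rel_def
proof (intro ballI allI impI)
  fix g u v assume g: "g \<in> G" and "(u, v) \<in> E\<^sup>*"
  from this(2) show "(g u, g v) \<in> E\<^sup>*"
  proof (induction rule: rtrancl_induct)
    case (step v w)
    then have "(g v, g w) \<in> E" using assms g unfolding invariant_rel_def by blast
    with step.IH show ?case by (rule rtrancl_into_rtrancl)
  qed simp
qed

lemma invariant_rel_two_type: "perm_group G \<Longrightarrow> invariant_rel G (two_type G p)"
  unfolding invariant_rel_def by (auto intro: two_type_closed)

definition setwise_stab :: "('a \<Rightarrow> 'a) set \<Rightarrow> 'a set \<Rightarrow> ('a \<Rightarrow> 'a) set" where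
  "setwise_stab G C = {g\<in>G. g ` C = C}"

lemma subgroup_setwise_stab:
  assumes "perm_group G" shows "subgroup_of (setwise_stab G C) G"
proof -
  have "inv g ` C = C" if "g \<in> G" "g ` C = C" for g
  proof -
    have "inj g" using assms that(1) by (simp add: perm_group_def bij_is_inj)
    then have "inv g ` (g ` C) = C" by (rule image_inv_f_f)
    then show ?thesis using that(2) by simp
  qed
  moreover have "(g \<circ> h) ` C = C" if "g ` C = C" "h ` C = C" for g h :: "'a \<Rightarrow> 'a"
    using that by (metis image_comp)
  ultimately show ?thesis
    using assms unfolding subgroup_of_def setwise_stab_def perm_group_def by auto
qed

lemma mem_setwise_stab_class:
  assumes "perm_group G" "invariant_rel G E" "sym E" "trans E" "g \<in> G" "(b, g b) \<in> E"
  shows "g \<in> setwise_stab G (E `` {b})"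
proof -
  have "g ` (E `` {b}) \<subseteq> E `` {b}"
  proof
    fix y assume "y \<in> g ` (E `` {b})"
    then obtain v where "(b, v) \<in> E" "y = g v" by blast
    then have "(g b, y) \<in> E" using assms(2,5) by (simp add: invariant_rel_def)
    then show "y \<in> E `` {b}" using assms(4,6) by (meson ImageI singletonI transE)
  qed
  moreover have "y \<in> g ` (E `` {b})" if "(b, y) \<in> E" for y
  proof -
    have g: "bij g" "inv g \<in> G" using assms(1,5) by (auto simp: perm_group_def)
    have "(g b, y) \<in> E" using assms(3,4,6) that by (meson symD transE)
    then have "(inv g (g b), inv g y) \<in> E" using assms(2) g(2) by (auto simp: invariant_rel_def)
    then have "(b, inv g y) \<in> E" using g(1) by (simp add: bij_is_inj)
    moreover have "y = g (inv g y)" using g(1) by (simp add: bij_is_surj surj_f_inv_f)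
    ultimately show ?thesis by blast
  qed
  ultimately show ?thesis using assms(5) by (auto simp: setwise_stab_def)
qed

lemma finite_orbit_of_finite_index:
  assumes "id \<in> G" "pstab G A \<subseteq> V" "finite (left_cosets V (pstab G A))" "a \<in> A"
  shows "finite ((\<lambda>h. h a) ` V)"
proof -
  let ?H = "pstab G A"
  have "(\<lambda>h. h a) ` V \<subseteq> (\<Union>K\<in>left_cosets V ?H. (\<lambda>k. k a) ` K)"
  proof
    fix y assume "y \<in> (\<lambda>h. h a) ` V"
    then obtain h where "h \<in> V" "y = h a" by blast
    moreover have "h \<in> (\<lambda>k. h \<circ> k) ` ?H"
      using assms(1) by (auto simp: pstab_def intro: image_eqI[of _ _ id])
    ultimately show "y \<in> (\<Union>K\<in>left_cosets V ?H. (\<lambda>k. k a) ` K)"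
      unfolding left_cosets_def by force
  qed
  moreover have "finite ((\<lambda>k. k a) ` K)" if K: "K \<in> left_cosets V ?H" for K
  proof -
    obtain h where "K = (\<lambda>k. h \<circ> k) ` ?H" using K by (auto simp: left_cosets_def)
    then have "(\<lambda>k. k a) ` K \<subseteq> {h a}" using assms(4) by (auto simp: pstab_def)
    then show ?thesis using finite_subset by blast
  qed
  ultimately show ?thesis using assms(3) by (meson finite_UN_I finite_subset)
qed

lemma subgroup_eq_if_infinite_orbit:
  assumes pg: "perm_group G" and na: "no_algebraicity G" and wei: "weak_elim_imag G"
    and V: "subgroup_of V G" "pstab G {b} \<subseteq> V" and inf: "infinite ((\<lambda>h. h b) ` V)"
  shows "V = G"
proof (rule ccontr)
  assume "V \<noteq> G"
  moreover have "open_subgroup V G" using V by (auto simp: open_subgroup_def)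
  ultimately obtain A where A: "pstab G A \<subseteq> V" "finite (left_cosets V (pstab G A))"
    using wei unfolding weak_elim_imag_def by blast
  have "A \<noteq> {}" using A(1) V(1) \<open>V \<noteq> G\<close> by (auto simp: pstab_def subgroup_of_def)
  then obtain a where "a \<in> A" by blast
  then have fin: "finite ((\<lambda>h. h a) ` V)"
    using finite_orbit_of_finite_index[OF _ A] pg by (simp add: perm_group_def)
  moreover have "infinite ((\<lambda>h. h a) ` V)" if "a \<noteq> b"
  proof -
    have "infinite {g a | g. g \<in> pstab G {b}}" using na that by (simp add: no_algebraicity_def)
    moreover have "{g a | g. g \<in> pstab G {b}} \<subseteq> (\<lambda>h. h a) ` V" using V(2) by blast
    ultimately show ?thesis by (meson finite_subset)
  qed
  ultimately show False using inf by blast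
qed

lemma invariant_equiv_trivial:
  assumes pg: "perm_group G" and tr: "transitive_group G" and na: "no_algebraicity G"
    and wei: "weak_elim_imag G"
    and E: "invariant_rel G E" "sym E" "trans E" and bb': "(b, b') \<in> E" "b \<noteq> b'"
  shows "E = UNIV"
proof -
  define C where "C = E `` {b}"
  define V where "V = setwise_stab G C"
  have "(b, b) \<in> E" using E(2,3) bb'(1) by (meson symD transE)
  then have bC: "b \<in> C" by (simp add: C_def)
  have inV: "g \<in> V" if "g \<in> G" "g b \<in> C" for g
    using mem_setwise_stab_class[OF pg E that(1)] that(2) by (simp add: C_def V_def)
  have C_orbit: "C \<subseteq> (\<lambda>h. h b) ` V"
  proof
    fix y assume "y \<in> C"
    moreover obtain g where "g \<in> G" "g b = y" using tr by (auto simp: transitive_group_def)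
    ultimately show "y \<in> (\<lambda>h. h b) ` V" using inV by blast
  qed
  have stab_V: "pstab G {b} \<subseteq> V" using inV bC by (auto simp: pstab_def)
  have "infinite {g b' | g. g \<in> pstab G {b}}" using na bb'(2) by (simp add: no_algebraicity_def)
  moreover have "{g b' | g. g \<in> pstab G {b}} \<subseteq> C"
  proof
    fix y assume "y \<in> {g b' | g. g \<in> pstab G {b}}"
    then obtain g where "g \<in> G" "g b = b" "y = g b'" by (auto simp: pstab_def)
    then show "y \<in> C" using E(1) bb'(1) unfolding C_def invariant_rel_def by (metis Image_singleton_iff)
  qed
  ultimately have "infinite ((\<lambda>h. h b) ` V)" using C_orbit by (meson finite_subset)
  then have "V = G"
    using subgroup_eq_if_infinite_orbit[OF pg na wei _ stab_V] subgroup_setwise_stab[OF pg]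
    by (simp add: V_def)
  have "y \<in> C" for y
  proof -
    obtain g where "g \<in> G" "g b = y" using tr by (auto simp: transitive_group_def)
    then have "g ` C = C" using \<open>V = G\<close> by (auto simp: V_def setwise_stab_def)
    then show "y \<in> C" using bC \<open>g b = y\<close> by blast
  qed
  have "(u, v) \<in> E" for u v
  proof -
    have "(b, u) \<in> E" "(b, v) \<in> E" using \<open>\<And>y. y \<in> C\<close> by (auto simp: C_def)
    then show ?thesis using E(2,3) by (meson symD transE)
  qed
  then show ?thesis by auto
qed

lemma two_type_siblings_connected:
  assumes pg: "perm_group G" and tr: "transitive_group G" and na: "no_algebraicity G"
    and wei: "weak_elim_imag G" and off: "fst p \<noteq> snd p"
  shows "((two_type G p)\<inverse> O two_type G p)\<^sup>* = UNIV"
proof -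
  let ?T = "two_type G p"
  have p: "(fst p, snd p) \<in> ?T" using two_type_refl[OF pg] by simp
  then have "infinite {d. (fst p, d) \<in> ?T}" by (rule two_type_successors_infinite[OF pg na off])
  then have "infinite ({d. (fst p, d) \<in> ?T} - {snd p})" by simp
  then obtain d where "(fst p, d) \<in> ?T" "d \<noteq> snd p" using infinite_imp_nonempty by blast
  with p have "(snd p, d) \<in> (?T\<inverse> O ?T)\<^sup>*" "snd p \<noteq> d" by blast+
  moreover have "invariant_rel G ((?T\<inverse> O ?T)\<^sup>*)"
    by (intro invariant_rel_rtrancl invariant_rel_relcomp invariant_rel_converse
        invariant_rel_two_type pg)
  moreover have "sym ((?T\<inverse> O ?T)\<^sup>*)" by (rule sym_rtrancl) (auto simp: sym_def)
  ultimately show ?thesis using invariant_equiv_trivial[OF pg tr na wei] trans_rtrancl by blast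
qed

definition respects_order :: "('a \<times> 'a) set \<Rightarrow> ('a \<times> 'a) set \<Rightarrow> bool" where
  "respects_order x T \<longleftrightarrow> (\<forall>a b c. (a, c) \<in> T \<longrightarrow> (b, c) \<in> T \<longrightarrow> \<not> strictly_between x a c b)"

lemma AE_respects_order:
  fixes \<mu> :: "('a::countable \<times> 'a) set measure"
  assumes "respects_2type G \<mu> T"
  shows "AE x in \<mu>. respects_order x T"
proof -
  have "AE x in \<mu>. (a, c) \<in> T \<longrightarrow> (b, c) \<in> T \<longrightarrow> \<not> strictly_between x a c b" for a b c
    using assms unfolding respects_2type_def by (intro AE_impI) auto
  then show ?thesis unfolding respects_order_def by (simp add: AE_all_countable)
qed

lemma respects_order_superset:
  assumes x: "x \<in> LO" and resp: "respects_order x T" "respects_order x (T\<inverse>)"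
    and "irrefl T" and conn: "(T\<inverse> O T)\<^sup>* = UNIV" and ab: "(a, b) \<in> T" "(a, b) \<in> x"
  shows "T \<subseteq> x"
proof -
  have total: "(u, v) \<in> x \<or> (v, u) \<in> x" if "(u, v) \<in> T" for u v
  proof -
    have "u \<noteq> v" using \<open>irrefl T\<close> that by (auto simp: irrefl_def)
    then show ?thesis using x by (simp add: LO_def is_LO_def)
  qed
  have pred_same_side: "(c', d) \<in> x" if "(c, d) \<in> T" "(c', d) \<in> T" "(c, d) \<in> x" for c c' d
    using resp(1) total[OF that(2)] that unfolding respects_order_def strictly_between_def by blast
  have succ_same_side: "(c, d') \<in> x" if "(c, d) \<in> T" "(c, d') \<in> T" "(c, d) \<in> x" for c d d'
    using resp(2) total[OF that(2)] that unfolding respects_order_def strictly_between_def by blast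
  define below where "below d \<longleftrightarrow> (\<forall>c. (c, d) \<in> T \<longrightarrow> (c, d) \<in> x)" for d
  have "below d" for d
  proof -
    have "(b, d) \<in> (T\<inverse> O T)\<^sup>*" using conn by simp
    then show ?thesis
    proof (induction rule: rtrancl_induct)
      case base
      show ?case using pred_same_side ab by (auto simp: below_def)
    next
      case (step d d')
      then obtain c where "(c, d) \<in> T" "(c, d') \<in> T" by blast
      with step.IH have "(c, d') \<in> x" using succ_same_side by (auto simp: below_def)
      then show ?case using pred_same_side \<open>(c, d') \<in> T\<close> by (auto simp: below_def)
    qed
  qed
  then show ?thesis by (auto simp: below_def)
qed

lemma space_LO_space: "space LO_space = LO"
  by (simp add: LO_space_def space_measure_of_conv)

lemma sets_LO_space_pair: "{x\<in>LO. (a, b) \<in> x} \<in> sets LO_space"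
proof -
  have "{{x\<in>LO. (a, b) \<in> x} | a b. True} \<subseteq> Pow LO" by auto
  then show ?thesis unfolding LO_space_def by (auto simp: sets_measure_of intro: sigma_sets.Basic)
qed

lemma sets_LO_space_superset:
  fixes T :: "('a::countable \<times> 'a) set"
  shows "{x\<in>LO. T \<subseteq> x} \<in> sets LO_space"
proof -
  have "{x\<in>space LO_space. \<forall>q. q \<in> T \<longrightarrow> q \<in> x} \<in> sets LO_space"
  proof (rule sets.sets_Collect_countable_All)
    fix q :: "'a \<times> 'a"
    show "{x\<in>space LO_space. q \<in> T \<longrightarrow> q \<in> x} \<in> sets LO_space"
      using sets_LO_space_pair[of "fst q" "snd q"] sets.top[of LO_space]
      by (cases "q \<in> T") (auto simp: space_LO_space)
  qed
  then show ?thesis by (simp add: space_LO_space subset_iff)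
qed

lemma act_LO:
  assumes "bij g" "x \<in> LO" shows "act g x \<in> LO"
proof -
  have inj: "inj (inv g)" using assms(1) by (simp add: bij_imp_bij_inv bij_is_inj)
  have lo: "irrefl x" "trans x" "\<And>a b. a \<noteq> b \<Longrightarrow> (a, b) \<in> x \<or> (b, a) \<in> x"
    using assms(2) by (auto simp: LO_def is_LO_def)
  have "irrefl (act g x)" using lo(1) by (auto simp: act_def irrefl_def)
  moreover have "trans (act g x)" using lo(2) unfolding act_def trans_def by blast
  moreover have "(a, b) \<in> act g x \<or> (b, a) \<in> act g x" if "a \<noteq> b" for a b
    using lo(3)[of "inv g a" "inv g b"] inj that by (auto simp: act_def inj_eq)
  ultimately show ?thesis by (auto simp: LO_def is_LO_def)
qed

lemma act_act_inv: "bij g \<Longrightarrow> act g (act (inv g) x) = x"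
  by (simp add: act_def bij_is_inj bij_is_surj surj_f_inv_f inv_inv_eq)

lemma act_image_superset:
  assumes pg: "perm_group G" and T: "invariant_rel G T" and "g \<in> G"
  shows "act g ` {x\<in>LO. T \<subseteq> x} = {x\<in>LO. T \<subseteq> x}" (is "_ = ?B")
proof -
  have maps: "act h x \<in> ?B" if "h \<in> G" "x \<in> ?B" for h x
  proof -
    have h: "bij h" "inv h \<in> G" using pg that(1) by (auto simp: perm_group_def)
    have x: "x \<in> LO" "T \<subseteq> x" using that(2) by simp_all
    have "(inv h c, inv h d) \<in> T" if "(c, d) \<in> T" for c d
      using T h(2) that by (simp add: invariant_rel_def)
    then have "T \<subseteq> act h x" using x(2) by (auto simp: act_def)
    then show ?thesis using act_LO[OF h(1) x(1)] by simp
  qed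
  have "?B \<subseteq> act g ` ?B"
  proof
    fix x assume "x \<in> ?B"
    have "bij g" "inv g \<in> G" using pg \<open>g \<in> G\<close> by (auto simp: perm_group_def)
    then have "x = act g (act (inv g) x)" "act (inv g) x \<in> ?B"
      using act_act_inv[of g x] maps[of "inv g" x] \<open>x \<in> ?B\<close> by simp_all
    then show "x \<in> act g ` ?B" by (rule image_eqI)
  qed
  moreover have "act g ` ?B \<subseteq> ?B" using maps[OF \<open>g \<in> G\<close>] by (rule image_subsetI)
  ultimately show ?thesis by (rule equalityI[rotated])
qed

lemma ergodic_AE_dichotomy:
  assumes "ergodic_measure G \<mu>" "prob_space \<mu>" "B \<in> sets \<mu>" "\<forall>g\<in>G. act g ` B = B"
  shows "(AE x in \<mu>. x \<in> B) \<or> (AE x in \<mu>. x \<notin> B)"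
proof -
  have "emeasure \<mu> B = 0 \<or> emeasure \<mu> B = 1"
    using assms(1,3,4) unfolding ergodic_measure_def by blast
  then show ?thesis
    using AE_not_in[of B \<mu>] prob_space.AE_in_set_eq_1[OF assms(2,3)] assms(3)
    by (auto simp: measure_def)
qed

lemma dirac_if_AE_decided:
  fixes \<mu> :: "('a::countable \<times> 'a) set measure"
  assumes sets: "sets \<mu> = sets LO_space" and ps: "prob_space \<mu>"
    and decided: "\<And>q. (AE x in \<mu>. q \<in> x) \<or> (AE x in \<mu>. q \<notin> x)"
  shows "\<exists>x\<in>LO. \<mu> = return LO_space x"
proof -
  define x0 where "x0 = {q. AE x in \<mu>. q \<in> x}"
  have "AE x in \<mu>. q \<in> x \<longleftrightarrow> q \<in> x0" for q
    using decided[of q] by (cases "AE x in \<mu>. q \<in> x") (auto simp: x0_def)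
  then have "AE x in \<mu>. \<forall>q. q \<in> x \<longleftrightarrow> q \<in> x0" by (simp add: AE_all_countable)
  then have AE_x0: "AE x in \<mu>. x = x0" by (rule AE_mp) auto
  have space: "space \<mu> = LO" using sets_eq_imp_space_eq[OF sets] space_LO_space by simp
  have "x0 \<in> LO"
  proof (rule ccontr)
    assume "x0 \<notin> LO"
    have "AE x in \<mu>. False" using AE_x0 AE_space by eventually_elim (use \<open>x0 \<notin> LO\<close> space in auto)
    then show False using prob_space.AE_False[OF ps] by simp
  qed
  moreover have "\<mu> = return LO_space x0"
  proof (rule measure_eqI)
    show "sets \<mu> = sets (return LO_space x0)" using sets by simp
    fix A assume A: "A \<in> sets \<mu>"
    have "emeasure \<mu> A = emeasure \<mu> (if x0 \<in> A then space \<mu> else {})"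
      using A AE_x0 by (intro emeasure_eq_AE) (auto elim: AE_mp intro: AE_I2)
    then show "emeasure \<mu> A = emeasure (return LO_space x0) A"
      using A sets prob_space.emeasure_space_1[OF ps] by (simp add: emeasure_return)
  qed
  ultimately show ?thesis by blast
qed

lemma pair_AE_decided:
  fixes \<mu> :: "('a::countable \<times> 'a) set measure"
  assumes pg: "perm_group G" and tr: "transitive_group G" and na: "no_algebraicity G"
    and wei: "weak_elim_imag G" and sets: "sets \<mu> = sets LO_space" and ps: "prob_space \<mu>"
    and erg: "ergodic_measure G \<mu>" and resp: "\<forall>\<tau>\<in>two_types G. respects_2type G \<mu> \<tau>"
  shows "(AE x in \<mu>. (a, b) \<in> x) \<or> (AE x in \<mu>. (a, b) \<notin> x)"
proof -
  have "space \<mu> = LO" using sets_eq_imp_space_eq[OF sets] space_LO_space by simp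
  then have AE_LO: "AE x in \<mu>. x \<in> LO" using AE_space[of \<mu>] by simp
  show ?thesis
  proof (cases "a = b")
    case True
    have "AE x in \<mu>. (a, b) \<notin> x" using AE_LO by (rule AE_mp) (auto simp: True LO_def is_LO_def irrefl_def)
    then show ?thesis ..
  next
    case False
    let ?T = "two_type G (a, b)"
    define B where "B = {x\<in>LO. ?T \<subseteq> x}"
    have "(AE x in \<mu>. x \<in> B) \<or> (AE x in \<mu>. x \<notin> B)"
    proof (rule ergodic_AE_dichotomy[OF erg ps])
      show "B \<in> sets \<mu>" using sets_LO_space_superset sets by (simp add: B_def)
      show "\<forall>g\<in>G. act g ` B = B"
        using act_image_superset[OF pg invariant_rel_two_type[OF pg]] by (simp add: B_def)
    qed
    moreover have "AE x in \<mu>. (a, b) \<in> x" if "AE x in \<mu>. x \<in> B"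
      using that by (rule AE_mp) (use two_type_refl[OF pg, of "(a, b)"] in \<open>auto simp: B_def\<close>)
    moreover have "AE x in \<mu>. (a, b) \<notin> x" if "AE x in \<mu>. x \<notin> B"
    proof -
      have irr: "irrefl ?T" using two_type_off_diagonal[OF pg] False by (force simp: irrefl_def)
      have conn: "(?T\<inverse> O ?T)\<^sup>* = UNIV" using two_type_siblings_connected[OF pg tr na wei] False by simp
      have "AE x in \<mu>. respects_order x ?T \<and> respects_order x (?T\<inverse>)"
        using resp two_type_in_two_types AE_respects_order two_type_converse by (metis AE_conjI)
      then show ?thesis using that AE_LO
        by eventually_elim
          (use respects_order_superset[OF _ _ _ irr conn two_type_refl[OF pg]] in \<open>auto simp: B_def\<close>)
    qed
    ultimately show ?thesis by blast
  qed
qed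

theorem mainTheorem16:
  fixes G :: "('a::countable \<Rightarrow> 'a) set"
    and \<mu> :: "('a \<times> 'a) set measure"
  assumes "closed_perm_group G"
    and "oligomorphic G"
    and "transitive_group G"
    and "no_algebraicity G"
    and "weak_elim_imag G"
    and "sets \<mu> = sets LO_space"
    and "prob_space \<mu>"
    and "invariant_measure G \<mu>"
    and "ergodic_measure G \<mu>"
    and "\<forall>\<tau>\<in>two_types G. respects_2type G \<mu> \<tau>"
  shows "\<exists>x\<in>LO. \<mu> = return LO_space x"
proof (rule dirac_if_AE_decided[OF assms(6,7)])
  have "perm_group G" using assms(1) by (simp add: closed_perm_group_def)
  then show "(AE x in \<mu>. q \<in> x) \<or> (AE x in \<mu>. q \<notin> x)" for q
    using pair_AE_decided[OF _ assms(3-5,6,7,9,10)] by (metis prod.collapse)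
qed

end
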